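(* Let $F:\mathcal{G}_{\Sigma,\Delta,\pi}\to\mathcal{G}_{\Sigma,\Delta,\pi}$ be a causal graph dynamics with a monotonic local rule $f$ of radius $r$, and assume that $\mathrm{Conj}_F(R)$ is a singleton $\{\overline{F}(R)\}$ for every renaming $R$. Let $G$ be a graph. Then the cocone $\theta^G:\widetilde{f}\circ\mathrm{Proj}_{\widetilde{i}/G}\Rightarrow F(G)$ whose component at an object $((H,C),m:H\to G)$ of $\widetilde{i}/G$ is the morphism $\theta^G_{((H,C),m)}:\widetilde{f}((H,C))\to F(G)$ with underlying renaming $\overline{F}(|m|)$, is a universal cocone, i.e. $F(G)$ together with $\theta^G$ is a colimit of $\widetilde{f}\circ\mathrm{Proj}_{\widetilde{i}/G}$.
   Context: Fix an uncountably infinite set $\mathcal{V}$, sets $\Sigma,\Delta$, finite $\pi$. Graphs: countable $V(G)\subset\mathcal{V}$, a set $E(G)$ of pairwise disjoint two-element subsets of $V(G)\times\pi$, partial labelings $\sigma(G),\delta(G)$; $\subseteq$ is componentwise inclusion. Renamings: bijections of $\mathcal{V}$ acting naturally on graphs/pointed graphs. $\mathrm{Conj}_F(R)=\{R'\mid F\circ R=R'\circ F\}$. Disk $G^r_c$: vertices at distance $\le r+1$ from $c$, edges with an endpoint at distance $\le r$, vertex labels restricted to distance $\le r$; $\mathcal{D}^r$ radius-$r$ disks, compared by inclusion with equal centers. A local rule of radius $r$: $f:\mathcal{D}^r\to$ graphs with renaming covariance, preservation of empty intersections, bounded output size, consistency of $f(G^r_u),f(G^r_v)$; CGD $F(G)=\bigcup_{v\in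 V(G)}f(G^r_v)$. Category $\mathbf{G}_{\Sigma,\Delta,\pi}$: objects graphs, morphism $m:G\to H$ a renaming $|m|$ with $|m|(G)\subseteq H$. Category $\mathbf{D}^r_{\Sigma,\Delta,\pi}$: objects $(H,\{c\})$ for $(H,c)\in\mathcal{D}^r$ and $(\varnothing,\emptyset)$; morphisms $m:(H_1,C_1)\to(H_2,C_2)$ are morphisms $H_1\to H_2$ with $|m|(C_1)\subseteq C_2$. $\widetilde{i}:\mathbf{D}^r\to\mathbf{G}$ drops the second component. $\widetilde{f}:\mathbf{D}^r\to\mathbf{G}$: $\widetilde{f}((H,\{c\}))=f((H,c))$, $\widetilde{f}((\varnothing,\emptyset))=\varnothing$, $|\widetilde{f}(m)|=\overline{F}(|m|)$. The comma category $\widetilde{i}/G$ has objects $((H,C),m:H\to G)$ and morphisms $n:((H_1,C_1),m\circ n)\to((H_2,C_2),m)$ for $n$ in $\mathbf{D}^r$; $\mathrm{Proj}_{\widetilde{i}/G}:\widetilde{i}/G\to\mathbf{D}^r$ is the first projection. *)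

theory Defs
  imports Main "HOL-Library.Countable_Set"
begin

text \<open>Vertex names live in a type 'v (the set V of names, assumed uncountable in the
theorem), ports in a finite type 'p, vertex labels in 's, edge labels in 'd.\<close>

record ('v, 'p, 's, 'd) graph =
  gV :: "'v set"
  gE :: "('v \<times> 'p) set set"
  gsig :: "'v \<rightharpoonup> 's"
  gdel :: "('v \<times> 'p) set \<rightharpoonup> 'd"

definition wf_graph :: "('v, 'p, 's, 'd) graph \<Rightarrow> bool" where
  "wf_graph G \<longleftrightarrow> countable (gV G)
     \<and> (\<forall>e\<in>gE G. card e = 2 \<and> e \<subseteq> gV G \<times> UNIV)
     \<and> (\<forall>e1\<in>gE G. \<forall>e2\<in>gE G. e1 \<noteq> e2 \<longrightarrow> e1 \<inter> e2 = {})
     \<and> dom (gsig G) \<subseteq> gV G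
     \<and> dom (gdel G) \<subseteq> gE G"

definition empty_graph :: "('v, 'p, 's, 'd) graph" where
  "empty_graph = \<lparr>gV = {}, gE = {}, gsig = Map.empty, gdel = Map.empty\<rparr>"

definition subg :: "('v, 'p, 's, 'd) graph \<Rightarrow> ('v, 'p, 's, 'd) graph \<Rightarrow> bool" where
  "subg G H \<longleftrightarrow> gV G \<subseteq> gV H \<and> gE G \<subseteq> gE H \<and> gsig G \<subseteq>\<^sub>m gsig H \<and> gdel G \<subseteq>\<^sub>m gdel H"

text \<open>Two graphs are consistent if their union is again a graph.\<close>
definition consistent :: "('v, 'p, 's, 'd) graph \<Rightarrow> ('v, 'p, 's, 'd) graph \<Rightarrow> bool" where
  "consistent G H \<longleftrightarrow>
     (\<forall>e1\<in>gE G. \<forall>e2\<in>gE H. e1 \<noteq> e2 \<longrightarrow> e1 \<inter> e2 = {})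
     \<and> (\<forall>x \<in> dom (gsig G) \<inter> dom (gsig H). gsig G x = gsig H x)
     \<and> (\<forall>x \<in> dom (gdel G) \<inter> dom (gdel H). gdel G x = gdel H x)"

definition Gunion :: "('v, 'p, 's, 'd) graph set \<Rightarrow> ('v, 'p, 's, 'd) graph" where
  "Gunion S = \<lparr>gV = \<Union>(gV ` S), gE = \<Union>(gE ` S),
     gsig = (\<lambda>x. if \<exists>H\<in>S. gsig H x \<noteq> None then gsig (SOME H. H \<in> S \<and> gsig H x \<noteq> None) x else None),
     gdel = (\<lambda>x. if \<exists>H\<in>S. gdel H x \<noteq> None then gdel (SOME H. H \<in> S \<and> gdel H x \<noteq> None) x else None)\<rparr>"

definition ren_edge :: "('v \<Rightarrow> 'v) \<Rightarrow> ('v \<times> 'p) set \<Rightarrow> ('v \<times> 'p) set" where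
  "ren_edge R e = (\<lambda>(v, p). (R v, p)) ` e"

text \<open>Renamings are bijections of 'v; their natural action on graphs.\<close>
definition ren :: "('v \<Rightarrow> 'v) \<Rightarrow> ('v, 'p, 's, 'd) graph \<Rightarrow> ('v, 'p, 's, 'd) graph" where
  "ren R G = \<lparr>gV = R ` gV G, gE = ren_edge R ` gE G,
     gsig = gsig G \<circ> inv R, gdel = gdel G \<circ> ren_edge (inv R)\<rparr>"

definition ren_pt :: "('v \<Rightarrow> 'v) \<Rightarrow> ('v, 'p, 's, 'd) graph \<times> 'v \<Rightarrow> ('v, 'p, 's, 'd) graph \<times> 'v" where
  "ren_pt R D = (ren R (fst D), R (snd D))"

definition adj :: "('v, 'p, 's, 'd) graph \<Rightarrow> 'v \<Rightarrow> 'v \<Rightarrow> bool" where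
  "adj G u v \<longleftrightarrow> (\<exists>e\<in>gE G. \<exists>p q. e = {(u, p), (v, q)})"

fun nbhd :: "('v, 'p, 's, 'd) graph \<Rightarrow> 'v \<Rightarrow> nat \<Rightarrow> 'v set" where
  "nbhd G c 0 = {c}"
| "nbhd G c (Suc n) = nbhd G c n \<union> {v. \<exists>u\<in>nbhd G c n. adj G u v}"

definition disk_edges :: "('v, 'p, 's, 'd) graph \<Rightarrow> nat \<Rightarrow> 'v \<Rightarrow> ('v \<times> 'p) set set" where
  "disk_edges G r c = {e \<in> gE G. \<exists>v p. (v, p) \<in> e \<and> v \<in> nbhd G c r}"

definition disk :: "('v, 'p, 's, 'd) graph \<Rightarrow> nat \<Rightarrow> 'v \<Rightarrow> ('v, 'p, 's, 'd) graph" where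
  "disk G r c = \<lparr>gV = nbhd G c (Suc r), gE = disk_edges G r c,
     gsig = gsig G |` nbhd G c r, gdel = gdel G |` disk_edges G r c\<rparr>"

definition Disks :: "nat \<Rightarrow> (('v, 'p, 's, 'd) graph \<times> 'v) set" where
  "Disks r = {(disk G r c, c) | G c. wf_graph G \<and> c \<in> gV G}"

definition local_rule ::
  "nat \<Rightarrow> (('v, 'p, 's, 'd) graph \<times> 'v \<Rightarrow> ('v, 'p, 's, 'd) graph) \<Rightarrow> bool" where
  "local_rule r f \<longleftrightarrow>
     (\<forall>D\<in>Disks r. wf_graph (f D))
     \<and> (\<forall>R. bij R \<longrightarrow> (\<exists>R'. bij R' \<and> (\<forall>D\<in>Disks r. f (ren_pt R D) = ren R' (f D))))
     \<and> (\<forall>D1\<in>Disks r. \<forall>D2\<in>Disks r. gV (fst D1) \<inter> gV (fst D2) = {} \<longrightarrow> gV (f D1) \<inter> gV (f D2) = {})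
     \<and> (\<exists>b::nat. \<forall>D\<in>Disks r. finite (gV (f D)) \<and> card (gV (f D)) \<le> b)
     \<and> (\<forall>G. wf_graph G \<longrightarrow> (\<forall>u\<in>gV G. \<forall>v\<in>gV G. consistent (f (disk G r u, u)) (f (disk G r v, v))))"

definition monotonic_rule ::
  "nat \<Rightarrow> (('v, 'p, 's, 'd) graph \<times> 'v \<Rightarrow> ('v, 'p, 's, 'd) graph) \<Rightarrow> bool" where
  "monotonic_rule r f \<longleftrightarrow>
     (\<forall>D1\<in>Disks r. \<forall>D2\<in>Disks r. snd D1 = snd D2 \<and> subg (fst D1) (fst D2) \<longrightarrow> subg (f D1) (f D2))"

definition is_cgd ::
  "(('v, 'p, 's, 'd) graph \<Rightarrow> ('v, 'p, 's, 'd) graph) \<Rightarrow> nat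
     \<Rightarrow> (('v, 'p, 's, 'd) graph \<times> 'v \<Rightarrow> ('v, 'p, 's, 'd) graph) \<Rightarrow> bool" where
  "is_cgd F r f \<longleftrightarrow> local_rule r f
     \<and> (\<forall>G. wf_graph G \<longrightarrow> F G = Gunion {f (disk G r v, v) | v. v \<in> gV G})"

definition Conj ::
  "(('v, 'p, 's, 'd) graph \<Rightarrow> ('v, 'p, 's, 'd) graph) \<Rightarrow> ('v \<Rightarrow> 'v) \<Rightarrow> ('v \<Rightarrow> 'v) set" where
  "Conj F R = {R'. bij R' \<and> (\<forall>G. wf_graph G \<longrightarrow> F (ren R G) = ren R' (F G))}"

definition Fbar ::
  "(('v, 'p, 's, 'd) graph \<Rightarrow> ('v, 'p, 's, 'd) graph) \<Rightarrow> ('v \<Rightarrow> 'v) \<Rightarrow> ('v \<Rightarrow> 'v)" where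
  "Fbar F R = (THE R'. R' \<in> Conj F R)"

text \<open>Objects of D^r: (H,{c}) for (H,c) a disk, and (empty,{}).\<close>
definition Dobj :: "nat \<Rightarrow> ('v, 'p, 's, 'd) graph \<times> 'v set \<Rightarrow> bool" where
  "Dobj r HC \<longleftrightarrow> HC = (empty_graph, {}) \<or> (\<exists>c. snd HC = {c} \<and> (fst HC, c) \<in> Disks r)"

text \<open>n is (the renaming underlying) a morphism (H1,C1) -> (H2,C2) of D^r.\<close>
definition Dmor :: "('v, 'p, 's, 'd) graph \<times> 'v set \<Rightarrow> ('v, 'p, 's, 'd) graph \<times> 'v set \<Rightarrow> ('v \<Rightarrow> 'v) \<Rightarrow> bool" where
  "Dmor HC1 HC2 n \<longleftrightarrow> bij n \<and> subg (ren n (fst HC1)) (fst HC2) \<and> n ` snd HC1 \<subseteq> snd HC2"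

definition ftilde ::
  "(('v, 'p, 's, 'd) graph \<times> 'v \<Rightarrow> ('v, 'p, 's, 'd) graph) \<Rightarrow> ('v, 'p, 's, 'd) graph \<times> 'v set
     \<Rightarrow> ('v, 'p, 's, 'd) graph" where
  "ftilde f HC = (if snd HC = {} then empty_graph else f (fst HC, the_elem (snd HC)))"

text \<open>Objects ((H,C), m : H -> G) of the comma category i~/G.\<close>
definition comma_obj :: "nat \<Rightarrow> ('v, 'p, 's, 'd) graph
     \<Rightarrow> (('v, 'p, 's, 'd) graph \<times> 'v set \<times> ('v \<Rightarrow> 'v)) set" where
  "comma_obj r G = {(H, C, m). Dobj r (H, C) \<and> bij m \<and> subg (ren m H) G}"

text \<open>lam is a cocone over f~ o Proj_{i~/G} with vertex X: components
lam j : f~(H,C) -> X, compatible with every morphism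
n : ((H1,C1), m o n) -> ((H2,C2), m) of i~/G, whose image under f~ o Proj has
underlying renaming Fbar F n.\<close>
definition is_cocone ::
  "(('v, 'p, 's, 'd) graph \<Rightarrow> ('v, 'p, 's, 'd) graph) \<Rightarrow> nat
     \<Rightarrow> (('v, 'p, 's, 'd) graph \<times> 'v \<Rightarrow> ('v, 'p, 's, 'd) graph)
     \<Rightarrow> ('v, 'p, 's, 'd) graph
     \<Rightarrow> (('v, 'p, 's, 'd) graph \<times> 'v set \<times> ('v \<Rightarrow> 'v) \<Rightarrow> ('v \<Rightarrow> 'v))
     \<Rightarrow> ('v, 'p, 's, 'd) graph \<Rightarrow> bool" where
  "is_cocone F r f G lam X \<longleftrightarrow>
     (\<forall>(H, C, m) \<in> comma_obj r G. bij (lam (H, C, m)) \<and> subg (ren (lam (H, C, m)) (ftilde f (H, C))) X)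
     \<and> (\<forall>(H2, C2, m) \<in> comma_obj r G. \<forall>H1 C1 n. Dobj r (H1, C1) \<and> Dmor (H1, C1) (H2, C2) n
          \<longrightarrow> lam (H1, C1, m \<circ> n) = lam (H2, C2, m) \<circ> Fbar F n)"

definition theta ::
  "(('v, 'p, 's, 'd) graph \<Rightarrow> ('v, 'p, 's, 'd) graph)
     \<Rightarrow> ('v, 'p, 's, 'd) graph \<times> 'v set \<times> ('v \<Rightarrow> 'v) \<Rightarrow> ('v \<Rightarrow> 'v)" where
  "theta F j = Fbar F (snd (snd j))"

end

theory Submission
  imports Defs
begin

(* theta is a cocone: for a disk (H, c) and m : H -> G, monotonicity of f gives
   f(H, c) <= f(H^r_c) <= F(H), and Fbar(m) carries F(H) onto F(m H) <= F(G), because F commutes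
   with renamings and is monotone (F(G) is the union of the monotone local images f(G^r_v, v)).
   theta is universal because the object ((empty, {}), id) of i~/G is initial -- inv m is a morphism
   from it to any ((H, C), m) -- so every cocone lam equals u o theta with u its component there;
   and u embeds F(G) into the vertex of lam, since each f(G^r_v, v) is the image of the object
   ((G^r_v, {v}), id), whose component is u as well. *)

section \<open>Renamings\<close>

lemma ren_edge_id [simp]: "ren_edge id e = e"
  by (simp add: ren_edge_def case_prod_unfold)

lemma ren_edge_comp: "ren_edge R (ren_edge S e) = ren_edge (R \<circ> S) e"
  by (auto simp: ren_edge_def image_iff)

lemma ren_edge_inv_cancel: "bij R \<Longrightarrow> ren_edge R (ren_edge (inv R) e) = e"
  by (metis ren_edge_comp ren_edge_id bij_is_surj surj_iff)

lemma inj_ren_edge_map: "inj R \<Longrightarrow> inj (\<lambda>(v, p). (R v, p))"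
  by (auto simp: inj_def)

lemma ren_id [simp]: "ren id G = G"
  by (simp add: ren_def fun_eq_iff)

lemma ren_empty_graph [simp]: "ren R empty_graph = empty_graph"
  by (simp add: ren_def empty_graph_def comp_def)

lemma ren_comp:
  assumes "bij R" "bij S"
  shows "ren (R \<circ> S) G = ren R (ren S G)"
proof -
  have "inv (R \<circ> S) = inv S \<circ> inv R"
    using assms by (simp add: o_inv_distrib)
  then show ?thesis
    by (simp add: ren_def image_comp ren_edge_comp comp_def)
qed

lemma card_ren_edge: "inj R \<Longrightarrow> card (ren_edge R e) = card e"
  unfolding ren_edge_def by (rule card_image[OF inj_on_subset[OF inj_ren_edge_map subset_UNIV]])

lemma ren_edge_Int: "inj R \<Longrightarrow> ren_edge R e1 \<inter> ren_edge R e2 = ren_edge R (e1 \<inter> e2)"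
  unfolding ren_edge_def by (rule image_Int[OF inj_ren_edge_map, symmetric])

lemma wf_graph_ren:
  assumes R: "bij R" and G: "wf_graph G"
  shows "wf_graph (ren R G)"
  unfolding wf_graph_def
proof (intro conjI ballI impI)
  show "countable (gV (ren R G))"
    using G by (simp add: ren_def wf_graph_def)
  fix e assume "e \<in> gE (ren R G)"
  then obtain e0 where e0: "e0 \<in> gE G" "e = ren_edge R e0"
    by (auto simp: ren_def)
  then show "card e = 2"
    using G R by (simp add: wf_graph_def card_ren_edge bij_is_inj)
  show "e \<subseteq> gV (ren R G) \<times> UNIV"
    using e0 G by (force simp: wf_graph_def ren_def ren_edge_def)
next
  fix e1 e2 assume "e1 \<in> gE (ren R G)" "e2 \<in> gE (ren R G)" "e1 \<noteq> e2"
  then obtain a1 a2 where "a1 \<in> gE G" "a2 \<in> gE G" "a1 \<noteq> a2"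
    and "e1 = ren_edge R a1" "e2 = ren_edge R a2"
    by (auto simp: ren_def)
  with G R show "e1 \<inter> e2 = {}"
    by (simp add: wf_graph_def ren_edge_Int bij_is_inj) (simp add: ren_edge_def)
next
  show "dom (gsig (ren R G)) \<subseteq> gV (ren R G)"
  proof
    fix x assume "x \<in> dom (gsig (ren R G))"
    then have "inv R x \<in> gV G"
      using G by (auto simp: ren_def wf_graph_def)
    then have "R (inv R x) \<in> R ` gV G"
      by (rule imageI)
    then show "x \<in> gV (ren R G)"
      using R by (simp add: ren_def bij_is_surj surj_f_inv_f)
  qed
  show "dom (gdel (ren R G)) \<subseteq> gE (ren R G)"
  proof
    fix e assume "e \<in> dom (gdel (ren R G))"
    then have "ren_edge (inv R) e \<in> gE G"
      using G by (auto simp: ren_def wf_graph_def)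
    then have "ren_edge R (ren_edge (inv R) e) \<in> ren_edge R ` gE G"
      by (rule imageI)
    then show "e \<in> gE (ren R G)"
      using R by (simp add: ren_def ren_edge_inv_cancel)
  qed
qed

lemma subg_trans [trans]: "subg A B \<Longrightarrow> subg B C \<Longrightarrow> subg A C"
  unfolding subg_def by (meson map_le_trans order_trans)

lemma empty_graph_subg [simp]: "subg empty_graph G"
  by (simp add: subg_def empty_graph_def)

lemma subg_ren: "subg A B \<Longrightarrow> subg (ren R A) (ren R B)"
  unfolding subg_def ren_def by (auto simp: map_le_def)

lemma ren_inv_cancel:
  assumes "bij u"
  shows "ren u (ren (inv u) X) = X" and "ren (inv u) (ren u X) = X"
proof -
  have "bij (inv u)" "u \<circ> inv u = id" "inv u \<circ> u = id"
    using assms by (simp_all add: bij_imp_bij_inv bijection.intro bijection.inv_comp_right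
        bijection.inv_comp_left)
  then show "ren u (ren (inv u) X) = X" and "ren (inv u) (ren u X) = X"
    using assms by (simp_all flip: ren_comp)
qed

lemma subg_ren_iff:
  assumes "bij u"
  shows "subg (ren u G) X \<longleftrightarrow> subg G (ren (inv u) X)"
  using subg_ren[of "ren u G" X "inv u"] subg_ren[of G "ren (inv u) X" u]
  by (auto simp: ren_inv_cancel[OF assms])

section \<open>Disks\<close>

lemma nbhd_mono: "m \<le> n \<Longrightarrow> nbhd G c m \<subseteq> nbhd G c n"
  by (rule lift_Suc_mono_le[of "nbhd G c"]) auto

lemma center_in_nbhd: "c \<in> nbhd G c n"
  by (induction n) auto

lemma adj_in_vertices: "wf_graph G \<Longrightarrow> adj G u v \<Longrightarrow> v \<in> gV G"
  by (fastforce simp: adj_def wf_graph_def)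

lemma nbhd_subset_vertices: "wf_graph G \<Longrightarrow> c \<in> gV G \<Longrightarrow> nbhd G c n \<subseteq> gV G"
  by (induction n) (auto dest: adj_in_vertices)

lemma adj_subg: "subg K G \<Longrightarrow> adj K u v \<Longrightarrow> adj G u v"
  by (auto simp: adj_def subg_def)

lemma nbhd_subg: "subg K G \<Longrightarrow> nbhd K c n \<subseteq> nbhd G c n"
  by (induction n) (auto dest: adj_subg)

lemma disk_simps:
  "gV (disk G r c) = nbhd G c (Suc r)" "gE (disk G r c) = disk_edges G r c"
  "gsig (disk G r c) = gsig G |` nbhd G c r" "gdel (disk G r c) = gdel G |` disk_edges G r c"
  by (simp_all add: disk_def)

lemma map_le_restrict_mono: "m1 \<subseteq>\<^sub>m m2 \<Longrightarrow> A \<subseteq> B \<Longrightarrow> m1 |` A \<subseteq>\<^sub>m m2 |` B"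
  by (auto simp: map_le_def restrict_map_def)

lemma disk_subg_mono:
  assumes "subg K G"
  shows "subg (disk K r c) (disk G r c)"
proof -
  have V: "nbhd K c n \<subseteq> nbhd G c n" for n
    using assms by (rule nbhd_subg)
  have E: "disk_edges K r c \<subseteq> disk_edges G r c"
    using assms V[of r] unfolding disk_edges_def subg_def by blast
  show ?thesis
    using assms V[of "Suc r"] V[of r] E
    unfolding subg_def disk_simps by (blast intro: map_le_restrict_mono)
qed

lemma disk_subg:
  assumes "wf_graph G" "c \<in> gV G"
  shows "subg (disk G r c) G"
  using nbhd_subset_vertices[OF assms, of "Suc r"]
  by (auto simp: subg_def disk_def disk_edges_def map_le_def simp del: nbhd.simps)

lemma card_2_obtain_other:
  assumes "card A = 2" "x \<in> A"
  obtains y where "A = {x, y}"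
proof -
  from card_2_iff[THEN iffD1, OF assms(1)] obtain a b where A: "A = {a, b}"
    by blast
  with assms(2) consider "x = a" | "x = b"
    by blast
  then show thesis
  proof cases
    case 1
    with A show thesis
      by (intro that[of b]) simp
  next
    case 2
    with A show thesis
      by (intro that[of a]) (simp add: insert_commute)
  qed
qed

lemma wf_graph_disk:
  assumes G: "wf_graph G" and c: "c \<in> gV G"
  shows "wf_graph (disk G r c)"
  unfolding wf_graph_def
proof (intro conjI ballI impI)
  have "countable (gV G)"
    using G by (simp add: wf_graph_def)
  then show "countable (gV (disk G r c))"
    unfolding disk_simps by (rule countable_subset[OF nbhd_subset_vertices[OF G c]])
next
  fix e assume "e \<in> gE (disk G r c)"
  then obtain v p where e: "e \<in> gE G" "(v, p) \<in> e" "v \<in> nbhd G c r"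
    unfolding disk_simps disk_edges_def by blast
  then show "card e = 2"
    using G by (simp add: wf_graph_def)
  then obtain y where "e = {(v, p), y}"
    using e(2) by (rule card_2_obtain_other)
  moreover obtain w q where "y = (w, q)"
    by (cases y)
  ultimately have e_eq: "e = {(v, p), (w, q)}"
    by simp
  with e(1) have "adj G v w"
    unfolding adj_def by blast
  with e(3) have "v \<in> nbhd G c (Suc r)" "w \<in> nbhd G c (Suc r)"
    by auto
  then show "e \<subseteq> gV (disk G r c) \<times> UNIV"
    by (simp add: e_eq disk_simps del: nbhd.simps)
next
  fix e1 e2 assume "e1 \<in> gE (disk G r c)" "e2 \<in> gE (disk G r c)" "e1 \<noteq> e2"
  then have "e1 \<in> gE G" "e2 \<in> gE G" "e1 \<noteq> e2"
    by (simp_all add: disk_simps disk_edges_def)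
  with G show "e1 \<inter> e2 = {}"
    by (simp add: wf_graph_def)
next
  show "dom (gsig (disk G r c)) \<subseteq> gV (disk G r c)"
    using nbhd_mono[of r "Suc r" G c] by (auto simp: disk_simps simp del: nbhd.simps)
  show "dom (gdel (disk G r c)) \<subseteq> gE (disk G r c)"
    by (auto simp: disk_simps)
qed

lemma disk_subg_disk_disk: "subg (disk G r c) (disk (disk G r c) r c)"
proof -
  let ?H = "disk G r c"
  have nbhd_sub: "nbhd G c n \<subseteq> nbhd ?H c n" if "n \<le> Suc r" for n
    using that
  proof (induction n)
    case (Suc n)
    have "adj ?H u v" if "u \<in> nbhd G c n" "adj G u v" for u v
    proof -
      have "u \<in> nbhd G c r"
        using that(1) Suc.prems nbhd_mono[of n r G c] by auto
      with that(2) show ?thesis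
        unfolding adj_def disk_simps disk_edges_def by blast
    qed
    with Suc show ?case
      by auto
  qed simp
  have V: "nbhd G c r \<subseteq> nbhd ?H c r" "nbhd G c (Suc r) \<subseteq> nbhd ?H c (Suc r)"
    using nbhd_sub[of r] nbhd_sub[of "Suc r"] by (simp_all del: nbhd.simps)
  then have "disk_edges G r c \<subseteq> disk_edges ?H r c"
    unfolding disk_edges_def disk_simps by blast
  with V show ?thesis
    unfolding subg_def disk_simps by (auto simp: map_le_def simp del: nbhd.simps)
qed

lemma Disks_wf_graph: "(H, c) \<in> Disks r \<Longrightarrow> wf_graph H"
  by (auto simp: Disks_def wf_graph_disk)

lemma Disks_center: "(H, c) \<in> Disks r \<Longrightarrow> c \<in> gV H"
  by (auto simp: Disks_def disk_def center_in_nbhd simp del: nbhd.simps)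

lemma Disks_subg_disk: "(H, c) \<in> Disks r \<Longrightarrow> subg H (disk H r c)"
  by (auto simp: Disks_def disk_subg_disk_disk)

lemma disk_in_Disks: "wf_graph G \<Longrightarrow> c \<in> gV G \<Longrightarrow> (disk G r c, c) \<in> Disks r"
  by (auto simp: Disks_def)

section \<open>Unions of graphs\<close>

lemma map_le_choice_union:
  assumes "H \<in> S"
    and agree: "\<And>H1 H2 x. H1 \<in> S \<Longrightarrow> H2 \<in> S \<Longrightarrow> x \<in> dom (g H1) \<inter> dom (g H2) \<Longrightarrow> g H1 x = g H2 x"
  shows "g H \<subseteq>\<^sub>m (\<lambda>x. if \<exists>H\<in>S. g H x \<noteq> None then g (SOME H. H \<in> S \<and> g H x \<noteq> None) x else None)"
  unfolding map_le_def
proof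
  fix x assume x: "x \<in> dom (g H)"
  let ?H = "SOME H. H \<in> S \<and> g H x \<noteq> None"
  have ex: "\<exists>H\<in>S. g H x \<noteq> None"
    using assms(1) x unfolding domIff by blast
  then have H: "?H \<in> S \<and> g ?H x \<noteq> None"
    using someI_ex[of "\<lambda>H. H \<in> S \<and> g H x \<noteq> None"] by blast
  then have "g H x = g ?H x"
    using agree[OF assms(1)] x unfolding domIff by blast
  with ex show "g H x = (if \<exists>H\<in>S. g H x \<noteq> None then g ?H x else None)"
    by (simp only: if_True)
qed

lemma choice_union_map_le:
  assumes "\<And>H. H \<in> S \<Longrightarrow> g H \<subseteq>\<^sub>m m"
  shows "(\<lambda>x. if \<exists>H\<in>S. g H x \<noteq> None then g (SOME H. H \<in> S \<and> g H x \<noteq> None) x else None) \<subseteq>\<^sub>m m"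
  unfolding map_le_def
proof (intro ballI)
  fix x
  let ?H = "SOME H. H \<in> S \<and> g H x \<noteq> None"
  assume "x \<in> dom (\<lambda>x. if \<exists>H\<in>S. g H x \<noteq> None then g (SOME H. H \<in> S \<and> g H x \<noteq> None) x else None)"
  then have ex: "\<exists>H\<in>S. g H x \<noteq> None"
    unfolding domIff by presburger
  then have H: "?H \<in> S \<and> g ?H x \<noteq> None"
    using someI_ex[of "\<lambda>H. H \<in> S \<and> g H x \<noteq> None"] by blast
  then have "g ?H x = m x"
    using assms[of ?H] unfolding map_le_def domIff by blast
  with ex show "(if \<exists>H\<in>S. g H x \<noteq> None then g ?H x else None) = m x"
    by (simp only: if_True)
qed

lemma Gunion_upper:
  assumes "H \<in> S" and "\<And>H1 H2. H1 \<in> S \<Longrightarrow> H2 \<in> S \<Longrightarrow> consistent H1 H2"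
  shows "subg H (Gunion S)"
  unfolding subg_def
proof (intro conjI)
  show "gV H \<subseteq> gV (Gunion S)" "gE H \<subseteq> gE (Gunion S)"
    using assms(1) by (auto simp: Gunion_def)
  show "gsig H \<subseteq>\<^sub>m gsig (Gunion S)"
    unfolding Gunion_def graph.select_convs
    by (rule map_le_choice_union[OF assms(1)]) (use assms(2) in \<open>unfold consistent_def, blast\<close>)
  show "gdel H \<subseteq>\<^sub>m gdel (Gunion S)"
    unfolding Gunion_def graph.select_convs
    by (rule map_le_choice_union[OF assms(1)]) (use assms(2) in \<open>unfold consistent_def, blast\<close>)
qed

lemma Gunion_least:
  assumes "\<And>H. H \<in> S \<Longrightarrow> subg H X"
  shows "subg (Gunion S) X"
  unfolding subg_def
proof (intro conjI)
  show "gV (Gunion S) \<subseteq> gV X" "gE (Gunion S) \<subseteq> gE X"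
    using assms by (auto simp: Gunion_def subg_def)
  show "gsig (Gunion S) \<subseteq>\<^sub>m gsig X"
    unfolding Gunion_def graph.select_convs
    by (rule choice_union_map_le) (use assms in \<open>simp add: subg_def\<close>)
  show "gdel (Gunion S) \<subseteq>\<^sub>m gdel X"
    unfolding Gunion_def graph.select_convs
    by (rule choice_union_map_le) (use assms in \<open>simp add: subg_def\<close>)
qed

section \<open>Causal graph dynamics\<close>

locale unique_conjugates =
  fixes F :: "('v, 'p, 's, 'd) graph \<Rightarrow> ('v, 'p, 's, 'd) graph"
  assumes Conj_eq: "bij R \<Longrightarrow> Conj F R = {Fbar F R}"
begin

lemma Fbar_in_Conj: "bij R \<Longrightarrow> Fbar F R \<in> Conj F R"
  using Conj_eq by blast

lemma bij_Fbar: "bij R \<Longrightarrow> bij (Fbar F R)"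
  using Fbar_in_Conj by (simp add: Conj_def)

lemma F_ren: "bij R \<Longrightarrow> wf_graph K \<Longrightarrow> F (ren R K) = ren (Fbar F R) (F K)"
  using Fbar_in_Conj by (simp add: Conj_def)

lemma Fbar_id: "Fbar F id = id"
proof -
  have "id \<in> Conj F id"
    by (simp add: Conj_def)
  then show ?thesis
    using Conj_eq[of id] by simp
qed

lemma Fbar_comp:
  assumes R: "bij R" and S: "bij S"
  shows "Fbar F (R \<circ> S) = Fbar F R \<circ> Fbar F S"
proof -
  have "F (ren (R \<circ> S) K) = ren (Fbar F R \<circ> Fbar F S) (F K)" if K: "wf_graph K" for K
  proof -
    have "F (ren (R \<circ> S) K) = F (ren R (ren S K))"
      using R S by (simp add: ren_comp)
    also have "\<dots> = ren (Fbar F R) (ren (Fbar F S) (F K))"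
      using R S K by (simp add: F_ren wf_graph_ren)
    also have "\<dots> = ren (Fbar F R \<circ> Fbar F S) (F K)"
      using R S by (simp add: ren_comp bij_Fbar)
    finally show ?thesis .
  qed
  with R S have "Fbar F R \<circ> Fbar F S \<in> Conj F (R \<circ> S)"
    by (simp add: Conj_def bij_comp bij_Fbar)
  with R S show ?thesis
    using Conj_eq[of "R \<circ> S"] by (simp add: bij_comp)
qed

end

lemma cgd_Gunion: "is_cgd F r f \<Longrightarrow> wf_graph G \<Longrightarrow> F G = Gunion {f (disk G r v, v) | v. v \<in> gV G}"
  by (simp add: is_cgd_def)

lemma cgd_disk_image_subg:
  assumes "is_cgd F r f" "wf_graph G" "v \<in> gV G"
  shows "subg (f (disk G r v, v)) (F G)"
proof -
  have "consistent (f (disk G r u, u)) (f (disk G r w, w))" if "u \<in> gV G" "w \<in> gV G" for u w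
    using assms(1,2) that by (simp add: is_cgd_def local_rule_def)
  then have "subg (f (disk G r v, v)) (Gunion {f (disk G r v, v) | v. v \<in> gV G})"
    using assms(3) by (intro Gunion_upper) auto
  with assms(1,2) show ?thesis
    by (simp add: cgd_Gunion)
qed

lemma monotonic_ruleD:
  "monotonic_rule r f \<Longrightarrow> (H1, c) \<in> Disks r \<Longrightarrow> (H2, c) \<in> Disks r \<Longrightarrow> subg H1 H2
    \<Longrightarrow> subg (f (H1, c)) (f (H2, c))"
  unfolding monotonic_rule_def by fastforce

lemma cgd_mono:
  assumes cgd: "is_cgd F r f" and mono: "monotonic_rule r f"
    and K: "wf_graph K" and G: "wf_graph G" and KG: "subg K G"
  shows "subg (F K) (F G)"
proof -
  have "subg (f (disk K r v, v)) (F G)" if v: "v \<in> gV K" for v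
  proof -
    have vG: "v \<in> gV G"
      using v KG by (auto simp: subg_def)
    have "subg (f (disk K r v, v)) (f (disk G r v, v))"
      using monotonic_ruleD[OF mono disk_in_Disks[OF K v] disk_in_Disks[OF G vG] disk_subg_mono[OF KG]] .
    also have "subg \<dots> (F G)"
      using cgd G vG by (rule cgd_disk_image_subg)
    finally show ?thesis .
  qed
  then have "subg (Gunion {f (disk K r v, v) | v. v \<in> gV K}) (F G)"
    by (intro Gunion_least) auto
  with cgd K show ?thesis
    by (simp add: cgd_Gunion)
qed

lemma cgd_rule_subg:
  assumes "is_cgd F r f" "monotonic_rule r f" "(H, c) \<in> Disks r"
  shows "subg (f (H, c)) (F H)"
proof -
  have H: "wf_graph H" "c \<in> gV H"
    using assms(3) by (rule Disks_wf_graph, rule Disks_center)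
  have "subg (f (H, c)) (f (disk H r c, c))"
    using assms(2,3) disk_in_Disks[OF H] Disks_subg_disk[OF assms(3)] by (rule monotonic_ruleD)
  also have "subg \<dots> (F H)"
    using assms(1) H by (rule cgd_disk_image_subg)
  finally show ?thesis .
qed

section \<open>The universal cocone\<close>

lemma empty_comma_obj: "(empty_graph, {}, id) \<in> comma_obj r G"
  by (simp add: comma_obj_def Dobj_def)

lemma disk_comma_obj: "wf_graph G \<Longrightarrow> v \<in> gV G \<Longrightarrow> (disk G r v, {v}, id) \<in> comma_obj r G"
  by (simp add: comma_obj_def Dobj_def disk_in_Disks disk_subg)

lemma is_coconeD:
  assumes "is_cocone F r f G lam X" "(H, C, m) \<in> comma_obj r G"
  shows "bij (lam (H, C, m))" "subg (ren (lam (H, C, m)) (ftilde f (H, C))) X"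
  using assms unfolding is_cocone_def by fast+

lemma is_cocone_compat:
  assumes "is_cocone F r f G lam X" "(H2, C2, m) \<in> comma_obj r G"
    "Dobj r (H1, C1)" "Dmor (H1, C1) (H2, C2) n"
  shows "lam (H1, C1, m \<circ> n) = lam (H2, C2, m) \<circ> Fbar F n"
  using assms unfolding is_cocone_def by fast

context unique_conjugates
begin

lemma cgd_rule_ren_subg:
  assumes cgd: "is_cgd F r f" and mono: "monotonic_rule r f" and D: "(H, c) \<in> Disks r"
    and m: "bij m" and HG: "subg (ren m H) G" and G: "wf_graph G"
  shows "subg (ren (Fbar F m) (f (H, c))) (F G)"
proof -
  have H: "wf_graph H"
    using D by (rule Disks_wf_graph)
  have "subg (ren (Fbar F m) (f (H, c))) (ren (Fbar F m) (F H))"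
    using cgd_rule_subg[OF cgd mono D] by (rule subg_ren)
  also have "ren (Fbar F m) (F H) = F (ren m H)"
    using m H by (simp add: F_ren)
  also have "subg \<dots> (F G)"
    using cgd mono wf_graph_ren[OF m H] G HG by (rule cgd_mono)
  finally show ?thesis .
qed

lemma theta_is_cocone:
  assumes cgd: "is_cgd F r f" and mono: "monotonic_rule r f" and G: "wf_graph G"
  shows "is_cocone F r f G (theta F) (F G)"
proof -
  have component: "bij (theta F (H, C, m)) \<and> subg (ren (theta F (H, C, m)) (ftilde f (H, C))) (F G)"
    if "(H, C, m) \<in> comma_obj r G" for H C m
  proof -
    from that have HC: "Dobj r (H, C)" and m: "bij m" and HG: "subg (ren m H) G"
      by (simp_all add: comma_obj_def)
    have "subg (ren (theta F (H, C, m)) (ftilde f (H, C))) (F G)"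
    proof (cases "C = {}")
      case False
      with HC obtain c where "C = {c}" "(H, c) \<in> Disks r"
        by (auto simp: Dobj_def)
      then show ?thesis
        using cgd_rule_ren_subg[OF cgd mono _ m HG G] by (simp add: theta_def ftilde_def)
    qed (simp add: ftilde_def)
    with m show ?thesis
      by (simp add: theta_def bij_Fbar)
  qed
  have naturality: "theta F (H1, C1, m \<circ> n) = theta F (H2, C2, m) \<circ> Fbar F n"
    if "bij m" "bij n" for H1 C1 H2 C2 m n
    using that by (simp add: theta_def Fbar_comp)
  show ?thesis
    unfolding is_cocone_def using component naturality by (auto simp: comma_obj_def Dmor_def)
qed

lemma cocone_eq_empty_component:
  assumes lam: "is_cocone F r f G lam X" and j: "(H, C, m) \<in> comma_obj r G"
  shows "lam (H, C, m) = lam (empty_graph, {}, id) \<circ> Fbar F m"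
proof -
  have m: "bij m"
    using j by (simp add: comma_obj_def)
  then have inv_m: "bij (inv m)" "m \<circ> inv m = id" "inv m \<circ> m = id"
    by (simp_all add: bij_imp_bij_inv bijection.intro bijection.inv_comp_right
        bijection.inv_comp_left)
  then have "Dmor (empty_graph, {}) (H, C) (inv m)"
    by (simp add: Dmor_def)
  with lam j have "lam (empty_graph, {}, m \<circ> inv m) = lam (H, C, m) \<circ> Fbar F (inv m)"
    by (intro is_cocone_compat) (auto simp: Dobj_def)
  then have "lam (empty_graph, {}, id) \<circ> Fbar F m = lam (H, C, m) \<circ> (Fbar F (inv m) \<circ> Fbar F m)"
    by (simp add: inv_m comp_assoc)
  also have "\<dots> = lam (H, C, m)"
    using m inv_m by (simp flip: Fbar_comp add: Fbar_id)
  finally show ?thesis ..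
qed

lemma cocone_empty_component_subg:
  assumes cgd: "is_cgd F r f" and G: "wf_graph G" and lam: "is_cocone F r f G lam X"
  shows "subg (ren (lam (empty_graph, {}, id)) (F G)) X"
proof -
  let ?u = "lam (empty_graph, {}, id)"
  have u: "bij ?u"
    using lam empty_comma_obj by (rule is_coconeD)
  have "subg (ren ?u (f (disk G r v, v))) X" if v: "v \<in> gV G" for v
  proof -
    have j: "(disk G r v, {v}, id) \<in> comma_obj r G"
      using G v by (rule disk_comma_obj)
    then have "lam (disk G r v, {v}, id) = ?u"
      using cocone_eq_empty_component[OF lam] by (simp add: Fbar_id)
    with is_coconeD(2)[OF lam j] show ?thesis
      by (simp add: ftilde_def)
  qed
  then have "subg (Gunion {f (disk G r v, v) | v. v \<in> gV G}) (ren (inv ?u) X)"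
    by (intro Gunion_least) (auto simp flip: subg_ren_iff[OF u])
  with cgd G u show ?thesis
    by (simp add: cgd_Gunion subg_ren_iff)
qed

lemma cocone_factors_through_theta:
  assumes cgd: "is_cgd F r f" and G: "wf_graph G" and lam: "is_cocone F r f G lam X"
  shows "\<exists>!u. bij u \<and> subg (ren u (F G)) X \<and> (\<forall>j \<in> comma_obj r G. lam j = u \<circ> theta F j)"
proof (rule ex1I)
  let ?u = "lam (empty_graph, {}, id)"
  show "bij ?u \<and> subg (ren ?u (F G)) X \<and> (\<forall>j \<in> comma_obj r G. lam j = ?u \<circ> theta F j)"
    using is_coconeD(1)[OF lam empty_comma_obj] cocone_empty_component_subg[OF cgd G lam]
      cocone_eq_empty_component[OF lam] by (auto simp: theta_def)
  fix u assume "bij u \<and> subg (ren u (F G)) X \<and> (\<forall>j \<in> comma_obj r G. lam j = u \<circ> theta F j)"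
  then show "u = ?u"
    using empty_comma_obj by (force simp: theta_def Fbar_id)
qed

end

theorem proposition4p22:
  fixes F :: "('v, 'p::finite, 's, 'd) graph \<Rightarrow> ('v, 'p, 's, 'd) graph"
    and f :: "('v, 'p, 's, 'd) graph \<times> 'v \<Rightarrow> ('v, 'p, 's, 'd) graph"
    and r :: nat
    and G :: "('v, 'p, 's, 'd) graph"
  assumes "\<not> countable (UNIV :: 'v set)"
    and "is_cgd F r f"
    and "monotonic_rule r f"
    and "\<forall>R. bij R \<longrightarrow> Conj F R = {Fbar F R}"
    and "wf_graph G"
  shows "is_cocone F r f G (theta F) (F G)
    \<and> (\<forall>X lam. wf_graph X \<longrightarrow> is_cocone F r f G lam X \<longrightarrow>
         (\<exists>!u. bij u \<and> subg (ren u (F G)) X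
               \<and> (\<forall>j \<in> comma_obj r G. lam j = u \<circ> theta F j)))"
proof -
  interpret unique_conjugates F
    using assms(4) by unfold_locales blast
  show ?thesis
    using theta_is_cocone[OF assms(2,3,5)] cocone_factors_through_theta[OF assms(2,5)] by blast
qed

end
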